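(* Let $A$ be a faithful Banach algebra and let $B$ be a proper right abstract Segal algebra in $A$. Then $B^* \neq \langle B^* \triangle B^{**}\rangle$. Symmetrically, if $B$ is a proper left abstract Segal algebra in $A$, then $B^* \neq \langle B^{**} \square B^*\rangle$.
   Context: Arens-type module actions: for a Banach algebra $B$, $a,b\in B$, $f\in B^*$, $m\in B^{**}$, define $f\square a\in B^*$ by $\langle f\square a,b\rangle=\langle f,ab\rangle$ and $m\square f\in B^*$ by $\langle m\square f,a\rangle=\langle m,f\square a\rangle$; define $a\triangle f\in B^*$ by $\langle a\triangle f,b\rangle=\langle f,ba\rangle$ and $f\triangle m\in B^*$ by $\langle f\triangle m,a\rangle=\langle m,a\triangle f\rangle$. For sets $X,Y$ of such objects, $\langle X\triangle Y\rangle$ (resp. $\langle X\square Y\rangle$) denotes the linear span of all products $x\triangle y$ (resp. $x\square y$), $x\in X$, $y\in Y$. A faithful Banach algebra $A$ is one whose relevant annihilators are trivial (if $xa=0$ for all $x\in A$, or $ax=0$ for all $x\in A$, then $a=0$). A right abstract Segal algebra in $A$ is a dense subspace $B\subseteq A$ which is a right ideal of $A$ ($BA\subseteq B$) and is a Banach algebra under a norm $\|\cdot\|_B$ such that $\|b\|_A\le C\|b\|_B$ for $b\in B$ and $\|ba\|_B\le C\|b\|_B\|a\|_A$ for $b\in B$, $a\in A$, for some constant $C$; a left abstract Segal algebra is defined symmetrically ($AB\subseteq B$, $\|ab\|_B\le C\|a\|_A\|b\|_B$). It is proper if $\|\cdot\|_A$ and $\|\cdot\|_B$ are not equivalent on $B$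 (equivalently $B\neq A$). *)

theory Defs
  imports "HOL-Analysis.Analysis"
begin

text \<open>Functionals on B are represented
  as real-valued functions on the ambient type which are zero off B (extensional).\<close>

definition faithful_algebra :: "'a::real_normed_algebra itself \<Rightarrow> bool" where
  "faithful_algebra T \<longleftrightarrow>
     (\<forall>a::'a. (\<forall>x. x * a = 0) \<longrightarrow> a = 0) \<and> (\<forall>a::'a. (\<forall>x. a * x = 0) \<longrightarrow> a = 0)"

definition norm_on :: "'a::real_vector set \<Rightarrow> ('a \<Rightarrow> real) \<Rightarrow> bool" where
  "norm_on B nB \<longleftrightarrow>
     (\<forall>b\<in>B. 0 \<le> nB b) \<and> (\<forall>b\<in>B. nB b = 0 \<longleftrightarrow> b = 0) \<and>
     (\<forall>b\<in>B. \<forall>c\<in>B. nB (b + c) \<le> nB b + nB c) \<and>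
     (\<forall>b\<in>B. \<forall>r. nB (r *\<^sub>R b) = \<bar>r\<bar> * nB b)"

definition complete_wrt :: "'a::real_vector set \<Rightarrow> ('a \<Rightarrow> real) \<Rightarrow> bool" where
  "complete_wrt B nB \<longleftrightarrow>
     (\<forall>s::nat \<Rightarrow> 'a. (\<forall>n. s n \<in> B) \<and>
        (\<forall>e>0. \<exists>N. \<forall>m\<ge>N. \<forall>n\<ge>N. nB (s m - s n) < e) \<longrightarrow>
        (\<exists>l\<in>B. (\<lambda>n. nB (s n - l)) \<longlonglongrightarrow> 0))"

definition banach_subalgebra_norm :: "'a::real_normed_algebra set \<Rightarrow> ('a \<Rightarrow> real) \<Rightarrow> bool" where
  "banach_subalgebra_norm B nB \<longleftrightarrow>
     subspace B \<and> (\<forall>b\<in>B. \<forall>c\<in>B. b * c \<in> B) \<and> norm_on B nB \<and> complete_wrt B nB \<and>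
     (\<forall>b\<in>B. \<forall>c\<in>B. nB (b * c) \<le> nB b * nB c)"

definition right_abstract_Segal :: "'a::{real_normed_algebra,banach} set \<Rightarrow> ('a \<Rightarrow> real) \<Rightarrow> bool" where
  "right_abstract_Segal B nB \<longleftrightarrow>
     banach_subalgebra_norm B nB \<and> closure B = UNIV \<and>
     (\<forall>b\<in>B. \<forall>a. b * a \<in> B) \<and>
     (\<exists>C. (\<forall>b\<in>B. norm b \<le> C * nB b) \<and> (\<forall>b\<in>B. \<forall>a. nB (b * a) \<le> C * nB b * norm a))"

definition left_abstract_Segal :: "'a::{real_normed_algebra,banach} set \<Rightarrow> ('a \<Rightarrow> real) \<Rightarrow> bool" where
  "left_abstract_Segal B nB \<longleftrightarrow>
     banach_subalgebra_norm B nB \<and> closure B = UNIV \<and>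
     (\<forall>b\<in>B. \<forall>a. a * b \<in> B) \<and>
     (\<exists>C. (\<forall>b\<in>B. norm b \<le> C * nB b) \<and> (\<forall>b\<in>B. \<forall>a. nB (a * b) \<le> C * norm a * nB b))"

definition proper_Segal :: "'a::real_normed_vector set \<Rightarrow> ('a \<Rightarrow> real) \<Rightarrow> bool" where
  "proper_Segal B nB \<longleftrightarrow>
     \<not> (\<exists>c1>0. \<exists>c2>0. \<forall>b\<in>B. norm b \<le> c1 * nB b \<and> nB b \<le> c2 * norm b)"

definition dual_sp :: "'a::real_vector set \<Rightarrow> ('a \<Rightarrow> real) \<Rightarrow> ('a \<Rightarrow> real) set" where
  "dual_sp B nB = {f. (\<forall>x. x \<notin> B \<longrightarrow> f x = 0) \<and>
      (\<forall>b\<in>B. \<forall>c\<in>B. f (b + c) = f b + f c) \<and> (\<forall>b\<in>B. \<forall>r. f (r *\<^sub>R b) = r * f b) \<and>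
      (\<exists>K. \<forall>b\<in>B. \<bar>f b\<bar> \<le> K * nB b)}"

definition dual_norm :: "'a set \<Rightarrow> ('a \<Rightarrow> real) \<Rightarrow> ('a \<Rightarrow> real) \<Rightarrow> real" where
  "dual_norm B nB f = Sup {\<bar>f b\<bar> | b. b \<in> B \<and> nB b \<le> 1}"

definition bidual_sp :: "'a::real_vector set \<Rightarrow> ('a \<Rightarrow> real) \<Rightarrow> (('a \<Rightarrow> real) \<Rightarrow> real) set" where
  "bidual_sp B nB = {m. (\<forall>f. f \<notin> dual_sp B nB \<longrightarrow> m f = 0) \<and>
      (\<forall>f\<in>dual_sp B nB. \<forall>g\<in>dual_sp B nB. m (\<lambda>x. f x + g x) = m f + m g) \<and>
      (\<forall>f\<in>dual_sp B nB. \<forall>r. m (\<lambda>x. r * f x) = r * m f) \<and>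
      (\<exists>K. \<forall>f\<in>dual_sp B nB. \<bar>m f\<bar> \<le> K * dual_norm B nB f)}"

definition fsq :: "'a::times set \<Rightarrow> ('a \<Rightarrow> real) \<Rightarrow> 'a \<Rightarrow> ('a \<Rightarrow> real)" where
  "fsq B f a = (\<lambda>b. if b \<in> B then f (a * b) else 0)"

definition msq :: "'a::times set \<Rightarrow> (('a \<Rightarrow> real) \<Rightarrow> real) \<Rightarrow> ('a \<Rightarrow> real) \<Rightarrow> ('a \<Rightarrow> real)" where
  "msq B m f = (\<lambda>a. if a \<in> B then m (fsq B f a) else 0)"

definition atr :: "'a::times set \<Rightarrow> 'a \<Rightarrow> ('a \<Rightarrow> real) \<Rightarrow> ('a \<Rightarrow> real)" where
  "atr B a f = (\<lambda>b. if b \<in> B then f (b * a) else 0)"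

definition ftr :: "'a::times set \<Rightarrow> ('a \<Rightarrow> real) \<Rightarrow> (('a \<Rightarrow> real) \<Rightarrow> real) \<Rightarrow> ('a \<Rightarrow> real)" where
  "ftr B f m = (\<lambda>a. if a \<in> B then m (atr B a f) else 0)"

definition lin_span :: "('a \<Rightarrow> real) set \<Rightarrow> ('a \<Rightarrow> real) set" where
  "lin_span S = {g. \<exists>n::nat. \<exists>c::nat \<Rightarrow> real. \<exists>v::nat \<Rightarrow> 'a \<Rightarrow> real.
      (\<forall>i<n. v i \<in> S) \<and> g = (\<lambda>x. \<Sum>i<n. c i * v i x)}"

end

theory Submission
  imports Defs
begin

text \<open>
  Idea: every functional of the form f \<triangle> m (right Segal case) or m \<box> f (left Segal case)
  is bounded on B with respect to the norm of A, because B is an ideal on which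
  multiplication by a has nB-operator norm at most C \<parallel>a\<parallel>; hence so is every element of
  their linear span.  On the other hand, if the norms on B are not equivalent, a gliding
  hump argument produces a functional in B^* that is not A-bounded, so B^* is strictly
  larger than the span.
\<close>

locale seminorm_on =
  fixes B :: "'a::real_vector set" and p :: "'a \<Rightarrow> real"
  assumes subspace: "subspace B"
    and p_add: "\<And>b c. b \<in> B \<Longrightarrow> c \<in> B \<Longrightarrow> p (b + c) \<le> p b + p c"
    and p_scale: "\<And>b r. b \<in> B \<Longrightarrow> p (r *\<^sub>R b) = \<bar>r\<bar> * p b"
begin

definition dominated_graph :: "('a \<times> real) set \<Rightarrow> bool" where
  "dominated_graph G \<longleftrightarrow>
     (\<forall>x v w. (x, v) \<in> G \<longrightarrow> (x, w) \<in> G \<longrightarrow> v = w) \<and>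
     (\<forall>x v y w. (x, v) \<in> G \<longrightarrow> (y, w) \<in> G \<longrightarrow> (x + y, v + w) \<in> G) \<and>
     (\<forall>x v r. (x, v) \<in> G \<longrightarrow> (r *\<^sub>R x, r * v) \<in> G) \<and>
     (\<forall>x v. (x, v) \<in> G \<longrightarrow> x \<in> B \<and> v \<le> p x)"

lemma dominated_graphD:
  assumes "dominated_graph G"
  shows "\<And>x v w. (x, v) \<in> G \<Longrightarrow> (x, w) \<in> G \<Longrightarrow> v = w"
    and "\<And>x v y w. (x, v) \<in> G \<Longrightarrow> (y, w) \<in> G \<Longrightarrow> (x + y, v + w) \<in> G"
    and "\<And>x v r. (x, v) \<in> G \<Longrightarrow> (r *\<^sub>R x, r * v) \<in> G"
    and "\<And>x v. (x, v) \<in> G \<Longrightarrow> x \<in> B" "\<And>x v. (x, v) \<in> G \<Longrightarrow> v \<le> p x"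
  using assms unfolding dominated_graph_def by blast+

lemma dominated_graph_chain_Union:
  assumes C: "C \<in> chains {G. dominated_graph G}"
  shows "dominated_graph (\<Union>C)"
proof -
  have dom: "dominated_graph G" if "G \<in> C" for G using chainsD2[OF C] that by blast
  have common: "\<exists>G\<in>C. a \<in> G \<and> b \<in> G" if "a \<in> \<Union>C" "b \<in> \<Union>C" for a b
    using that chainsD[OF C] by blast
  show ?thesis
    unfolding dominated_graph_def
  proof (intro conjI allI impI)
    fix x v w assume "(x, v) \<in> \<Union>C" "(x, w) \<in> \<Union>C"
    then obtain G where "G \<in> C" "(x, v) \<in> G" "(x, w) \<in> G" using common by blast
    then show "v = w" using dom unfolding dominated_graph_def by blast
  next
    fix x v y w assume "(x, v) \<in> \<Union>C" "(y, w) \<in> \<Union>C"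
    then obtain G where "G \<in> C" "(x, v) \<in> G" "(y, w) \<in> G" using common by blast
    then show "(x + y, v + w) \<in> \<Union>C" using dom unfolding dominated_graph_def by blast
  next
    fix x v r assume "(x, v) \<in> \<Union>C"
    then obtain G where "G \<in> C" "(x, v) \<in> G" by blast
    then show "(r *\<^sub>R x, r * v) \<in> \<Union>C" using dom unfolding dominated_graph_def by blast
  next
    fix x v assume "(x, v) \<in> \<Union>C"
    then obtain G where "G \<in> C" "(x, v) \<in> G" by blast
    then show "x \<in> B" "v \<le> p x" using dom unfolding dominated_graph_def by blast+
  qed
qed

text \<open>The classical one-dimensional extension step: the value c for a new vector y must lie
  between all lower bounds v - p(s - y) and upper bounds p(s + y) - v, which are compatible
  by subadditivity of p.\<close>
lemma extension_constant:
  assumes G: "dominated_graph G" and G0: "(0, 0) \<in> G" and y: "y \<in> B"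
  obtains c where "\<And>s v. (s, v) \<in> G \<Longrightarrow> v - p (s - y) \<le> c"
    and "\<And>s v. (s, v) \<in> G \<Longrightarrow> c \<le> p (s + y) - v"
proof
  define L where "L = {v - p (s - y) | s v. (s, v) \<in> G}"
  have key: "v - p (s - y) \<le> p (s' + y) - v'" if "(s, v) \<in> G" "(s', v') \<in> G" for s v s' v'
  proof -
    have sB: "s \<in> B" and s'B: "s' \<in> B" and "v + v' \<le> p (s + s')"
      using dominated_graphD(4,5)[OF G] dominated_graphD(2)[OF G that] that by blast+
    moreover have "p (s + s') \<le> p (s - y) + p (s' + y)"
      using p_add[of "s - y" "s' + y"] sB s'B y subspace by (simp add: subspace_diff subspace_add)
    ultimately show ?thesis by simp
  qed
  have "L \<noteq> {}" using G0 unfolding L_def by blast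
  moreover have "bdd_above L" unfolding L_def bdd_above_def using key[OF _ G0] by auto
  ultimately show "v - p (s - y) \<le> Sup L" "Sup L \<le> p (s' + y) - v'"
    if "(s, v) \<in> G" "(s', v') \<in> G" for s v s' v'
    using that key by (auto intro!: cSup_upper cSup_least simp: L_def)
qed

text \<open>With such a c, the extended graph s + t y \<mapsto> v + t c stays below p: for t > 0 use the
  upper bound at s/t, for t < 0 the lower bound at s/(-t).\<close>
lemma extension_dominated:
  assumes G: "dominated_graph G" and y: "y \<in> B"
    and c_ge: "\<And>s v. (s, v) \<in> G \<Longrightarrow> v - p (s - y) \<le> c"
    and c_le: "\<And>s v. (s, v) \<in> G \<Longrightarrow> c \<le> p (s + y) - v"
    and sv: "(s, v) \<in> G"
  shows "v + t * c \<le> p (s + t *\<^sub>R y)"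
proof (cases t "0::real" rule: linorder_cases)
  case equal
  then show ?thesis using dominated_graphD(5)[OF G sv] by simp
next
  case greater
  have scaled: "((1/t) *\<^sub>R s, (1/t) * v) \<in> G" and sB: "s \<in> B"
    using dominated_graphD(3,4)[OF G sv] by blast+
  have "t * c \<le> t * p ((1/t) *\<^sub>R s + y) - v"
    using c_le[OF scaled] greater by (simp add: field_simps)
  also have "t * p ((1/t) *\<^sub>R s + y) = p (s + t *\<^sub>R y)"
    using p_scale[of "(1/t) *\<^sub>R s + y" t] greater sB y subspace
    by (simp add: subspace_add subspace_scale scaleR_add_right)
  finally show ?thesis by simp
next
  case less
  define u where "u = - t"
  have u: "u > 0" using less u_def by simp
  have scaled: "((1/u) *\<^sub>R s, (1/u) * v) \<in> G" and sB: "s \<in> B"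
    using dominated_graphD(3,4)[OF G sv] by blast+
  have "v - u * p ((1/u) *\<^sub>R s - y) \<le> u * c"
    using c_ge[OF scaled] u by (simp add: field_simps)
  also have "u * p ((1/u) *\<^sub>R s - y) = p (u *\<^sub>R ((1/u) *\<^sub>R s - y))"
    using p_scale[of "(1/u) *\<^sub>R s - y" u] u sB y subspace
    by (simp add: subspace_diff subspace_scale)
  also have "u *\<^sub>R ((1/u) *\<^sub>R s - y) = s + t *\<^sub>R y"
    using u u_def by (simp add: scaleR_diff_right)
  finally show ?thesis using u_def by simp
qed

definition extended_graph :: "('a \<times> real) set \<Rightarrow> 'a \<Rightarrow> real \<Rightarrow> ('a \<times> real) set" where
  "extended_graph G y c = {(s + t *\<^sub>R y, v + t * c) | s v t. (s, v) \<in> G}"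

lemma extended_graphI: "(s, v) \<in> G \<Longrightarrow> (s + t *\<^sub>R y, v + t * c) \<in> extended_graph G y c"
  unfolding extended_graph_def by blast

text \<open>If y is not in the domain of G, the decomposition s + t y is unique, so the
  extended graph is again single-valued.\<close>
lemma extension_coefficient_unique:
  assumes G: "dominated_graph G" and new: "\<And>v. (y, v) \<notin> G"
    and eq: "s + t *\<^sub>R y = s' + t' *\<^sub>R y" and sv: "(s, v) \<in> G" "(s', v') \<in> G"
  shows "t = t'"
proof (rule ccontr)
  assume "t \<noteq> t'"
  have "(t - t') *\<^sub>R y = s' - s"
    using eq by (simp add: algebra_simps)
  then have "(1 / (t - t')) *\<^sub>R ((t - t') *\<^sub>R y) = (1 / (t - t')) *\<^sub>R (s' - s)"
    by simp
  then have "y = (1 / (t - t')) *\<^sub>R (s' - s)"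
    using \<open>t \<noteq> t'\<close> by simp
  moreover have "(s' - s, v' - v) \<in> G"
    using dominated_graphD(2)[OF G sv(2) dominated_graphD(3)[OF G sv(1), of "-1"]] by simp
  ultimately show False
    using dominated_graphD(3)[OF G, of "s' - s" "v' - v" "1 / (t - t')"] new by simp
qed

lemma extended_graph_dominated:
  assumes G: "dominated_graph G" and y: "y \<in> B" and new: "\<And>v. (y, v) \<notin> G"
    and c_ge: "\<And>s v. (s, v) \<in> G \<Longrightarrow> v - p (s - y) \<le> c"
    and c_le: "\<And>s v. (s, v) \<in> G \<Longrightarrow> c \<le> p (s + y) - v"
  shows "dominated_graph (extended_graph G y c)"
  unfolding dominated_graph_def
proof (intro conjI allI impI)
  let ?G' = "extended_graph G y c"
  fix x w1 w2 assume "(x, w1) \<in> ?G'" "(x, w2) \<in> ?G'"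
  then obtain s v t s' v' t' where x: "x = s + t *\<^sub>R y" "w1 = v + t * c" "(s, v) \<in> G"
    "x = s' + t' *\<^sub>R y" "w2 = v' + t' * c" "(s', v') \<in> G"
    unfolding extended_graph_def by blast
  have "t = t'" using extension_coefficient_unique[OF G new _ x(3,6), of t t'] x by simp
  moreover have "v = v'" using dominated_graphD(1)[OF G, of s v v'] x calculation by simp
  ultimately show "w1 = w2" using x by simp
next
  fix x w x' w' assume "(x, w) \<in> extended_graph G y c" "(x', w') \<in> extended_graph G y c"
  then obtain s v t s' v' t' where x: "x = s + t *\<^sub>R y" "w = v + t * c" "(s, v) \<in> G"
    "x' = s' + t' *\<^sub>R y" "w' = v' + t' * c" "(s', v') \<in> G"
    unfolding extended_graph_def by blast
  have "x + x' = (s + s') + (t + t') *\<^sub>R y" "w + w' = (v + v') + (t + t') * c"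
    using x by (simp_all add: algebra_simps)
  then show "(x + x', w + w') \<in> extended_graph G y c"
    using extended_graphI[OF dominated_graphD(2)[OF G x(3,6)]] by simp
next
  fix x w r assume "(x, w) \<in> extended_graph G y c"
  then obtain s v t where x: "x = s + t *\<^sub>R y" "w = v + t * c" "(s, v) \<in> G"
    unfolding extended_graph_def by blast
  have "r *\<^sub>R x = r *\<^sub>R s + (r * t) *\<^sub>R y" "r * w = r * v + (r * t) * c"
    using x by (simp_all add: algebra_simps)
  then show "(r *\<^sub>R x, r * w) \<in> extended_graph G y c"
    using extended_graphI[OF dominated_graphD(3)[OF G x(3)]] by simp
next
  fix x w assume "(x, w) \<in> extended_graph G y c"
  then obtain s v t where x: "x = s + t *\<^sub>R y" "w = v + t * c" "(s, v) \<in> G"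
    unfolding extended_graph_def by blast
  show "x \<in> B"
    using dominated_graphD(4)[OF G x(3)] y subspace x(1) by (simp add: subspace_add subspace_scale)
  show "w \<le> p x"
    using extension_dominated[OF G y c_ge c_le x(3), of t] x(1,2) by simp
qed

lemma dominated_graph_extend:
  assumes G: "dominated_graph G" and G0: "(0, 0) \<in> G" and y: "y \<in> B"
    and new: "\<And>v. (y, v) \<notin> G"
  obtains G' where "dominated_graph G'" "G \<subseteq> G'" "\<exists>v. (y, v) \<in> G'"
proof -
  obtain c where c_ge: "\<And>s v. (s, v) \<in> G \<Longrightarrow> v - p (s - y) \<le> c"
    and c_le: "\<And>s v. (s, v) \<in> G \<Longrightarrow> c \<le> p (s + y) - v"
    using extension_constant[OF G G0 y] by blast
  have "G \<subseteq> extended_graph G y c" using extended_graphI[of _ _ G 0] by auto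
  moreover have "(y, c) \<in> extended_graph G y c" using extended_graphI[OF G0, of 1] by simp
  ultimately show ?thesis
    using that extended_graph_dominated[OF G y new c_ge c_le] by blast
qed

lemma line_graph_dominated:
  assumes x0: "x0 \<in> B" "x0 \<noteq> 0" "p x0 = 1"
  shows "dominated_graph {(t *\<^sub>R x0, t) | t. True}"
  unfolding dominated_graph_def
proof (intro conjI allI impI)
  let ?L = "{(t *\<^sub>R x0, t) | t. True}"
  fix x v w assume "(x, v) \<in> ?L" "(x, w) \<in> ?L"
  then show "v = w" using x0(2) by (auto simp: scaleR_cancel_right)
next
  fix x v y w assume "(x, v) \<in> {(t *\<^sub>R x0, t) | t. True}" "(y, w) \<in> {(t *\<^sub>R x0, t) | t. True}"
  then obtain t t' where "x = t *\<^sub>R x0" "v = t" "y = t' *\<^sub>R x0" "w = t'" by blast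
  moreover have "((t + t') *\<^sub>R x0, t + t') \<in> {(t *\<^sub>R x0, t) | t. True}" by blast
  ultimately show "(x + y, v + w) \<in> {(t *\<^sub>R x0, t) | t. True}" by (simp add: scaleR_add_left)
next
  fix x v r assume "(x, v) \<in> {(t *\<^sub>R x0, t) | t. True}"
  then obtain t where "x = t *\<^sub>R x0" "v = t" by blast
  moreover have "((r * t) *\<^sub>R x0, r * t) \<in> {(t *\<^sub>R x0, t) | t. True}" by blast
  ultimately show "(r *\<^sub>R x, r * v) \<in> {(t *\<^sub>R x0, t) | t. True}" by simp
next
  fix x v assume "(x, v) \<in> {(t *\<^sub>R x0, t) | t. True}"
  then obtain t where "x = t *\<^sub>R x0" "v = t" by blast
  moreover have "t \<le> p (t *\<^sub>R x0)" using p_scale[OF x0(1)] x0(3) by simp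
  ultimately show "x \<in> B" "v \<le> p x" using subspace x0(1) by (auto simp: subspace_scale)
qed

text \<open>By Zorn's lemma there is a maximal dominated graph containing (x0, 1); by the extension
  step, a maximal one is defined on all of B.\<close>
lemma total_dominated_graph:
  assumes x0: "x0 \<in> B" "x0 \<noteq> 0" "p x0 = 1"
  obtains M where "dominated_graph M" "(x0, 1) \<in> M" "\<And>y. y \<in> B \<Longrightarrow> \<exists>v. (y, v) \<in> M"
proof -
  define A where "A = {G. dominated_graph G \<and> (x0, 1) \<in> G}"
  define L where "L = {(t *\<^sub>R x0, t) | t. True}"
  have "(1 *\<^sub>R x0, 1) \<in> L" unfolding L_def by blast
  then have "L \<in> A"
    unfolding A_def L_def using line_graph_dominated[OF x0] by simp
  have chain_bound: "\<exists>U\<in>A. \<forall>X\<in>C. X \<subseteq> U" if C: "C \<in> chains A" for C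
  proof (cases "C = {}")
    case True
    then show ?thesis using \<open>L \<in> A\<close> by blast
  next
    case False
    have CA: "C \<subseteq> A" using chainsD2[OF C] .
    then have "C \<in> chains {G. dominated_graph G}"
      using C unfolding A_def chains_def by auto
    then have "dominated_graph (\<Union>C)" by (rule dominated_graph_chain_Union)
    moreover have "(x0, 1) \<in> \<Union>C" using False CA unfolding A_def by blast
    ultimately have "\<Union>C \<in> A" unfolding A_def by blast
    then show ?thesis by blast
  qed
  have "\<exists>M\<in>A. \<forall>X\<in>A. M \<subseteq> X \<longrightarrow> X = M"
    by (rule Zorn_Lemma2) (use chain_bound in blast)
  then obtain M where MA: "M \<in> A" and max: "\<And>X. X \<in> A \<Longrightarrow> M \<subseteq> X \<Longrightarrow> X = M"
    by blast
  from MA have M: "dominated_graph M" and Mx0: "(x0, 1) \<in> M" unfolding A_def by blast+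
  have M0: "(0, 0) \<in> M" using dominated_graphD(3)[OF M Mx0, of 0] by simp
  have "\<exists>v. (y, v) \<in> M" if y: "y \<in> B" for y
  proof (rule ccontr)
    assume new: "\<nexists>v. (y, v) \<in> M"
    obtain M' where M': "dominated_graph M'" "M \<subseteq> M'" "\<exists>v. (y, v) \<in> M'"
      using dominated_graph_extend[OF M M0 y] new by blast
    have "M' \<in> A" unfolding A_def using M'(1,2) Mx0 by blast
    then have "M' = M" using max M'(2) by blast
    then show False using M'(3) new by blast
  qed
  then show ?thesis using that M Mx0 by blast
qed

theorem hahn_banach:
  assumes x0: "x0 \<in> B" "x0 \<noteq> 0" "p x0 = 1"
  obtains g where "\<And>x. x \<notin> B \<Longrightarrow> g x = 0"
    "\<And>b c. b \<in> B \<Longrightarrow> c \<in> B \<Longrightarrow> g (b + c) = g b + g c"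
    "\<And>b r. b \<in> B \<Longrightarrow> g (r *\<^sub>R b) = r * g b"
    "\<And>b. b \<in> B \<Longrightarrow> \<bar>g b\<bar> \<le> p b" "g x0 = 1"
proof -
  obtain M where M: "dominated_graph M" and Mx0: "(x0, 1) \<in> M"
    and total: "\<And>y. y \<in> B \<Longrightarrow> \<exists>v. (y, v) \<in> M"
    using total_dominated_graph[OF x0] by blast
  define g where "g x = (if x \<in> B then (THE v. (x, v) \<in> M) else 0)" for x
  have g_eq: "g x = v" if "(x, v) \<in> M" for x v
    using that dominated_graphD(1,4)[OF M] unfolding g_def by (auto intro: the_equality)
  have g_graph: "(x, g x) \<in> M" if "x \<in> B" for x
    using total[OF that] g_eq by auto
  have add: "(x + y, g x + g y) \<in> M" and scale: "(r *\<^sub>R x, r * g x) \<in> M"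
    and bound: "g x \<le> p x"
    if "x \<in> B" "y \<in> B" for x y r
    using dominated_graphD(2)[OF M g_graph[OF that(1)] g_graph[OF that(2)]]
      dominated_graphD(3,5)[OF M g_graph[OF that(1)]] by blast+
  show ?thesis
  proof
    show "g x = 0" if "x \<notin> B" for x using that unfolding g_def by simp
    show "g (b + c) = g b + g c" if "b \<in> B" "c \<in> B" for b c using g_eq[OF add[OF that]] .
    show "g (r *\<^sub>R b) = r * g b" if "b \<in> B" for b r using g_eq[OF scale[OF that that]] .
    show "\<bar>g b\<bar> \<le> p b" if "b \<in> B" for b
    proof -
      have "- g b = g (- b)" using g_eq[OF scale[OF that that, of "-1"]] by simp
      also have "\<dots> \<le> p (- b)" using bound subspace that by (simp add: subspace_neg)
      also have "\<dots> = p b" using p_scale[OF that, of "-1"] by simp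
      finally show ?thesis using bound[OF that that] by linarith
    qed
    show "g x0 = 1" using g_eq[OF Mx0] .
  qed
qed

end

lemma norm_onD:
  assumes "norm_on B nB" and "b \<in> B"
  shows "0 \<le> nB b" "nB b = 0 \<longleftrightarrow> b = 0" "nB (r *\<^sub>R b) = \<bar>r\<bar> * nB b"
  using assms unfolding norm_on_def by auto

lemma norm_on_seminorm_on:
  assumes "subspace B" "norm_on B nB"
  shows "seminorm_on B nB"
  using assms unfolding norm_on_def seminorm_on_def by blast

lemma norming_functional:
  assumes sub: "subspace B" and nB: "norm_on B nB" and x: "x \<in> B" "nB x = 1"
  shows "\<exists>g\<in>dual_sp B nB. g x = 1 \<and> (\<forall>b\<in>B. \<bar>g b\<bar> \<le> nB b)"
proof -
  interpret seminorm_on B nB using norm_on_seminorm_on[OF sub nB] .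
  have "x \<noteq> 0" using norm_onD(2)[OF nB x(1)] x(2) by auto
  then obtain g where g: "\<And>x. x \<notin> B \<Longrightarrow> g x = 0"
    "\<And>b c. b \<in> B \<Longrightarrow> c \<in> B \<Longrightarrow> g (b + c) = g b + g c"
    "\<And>b r. b \<in> B \<Longrightarrow> g (r *\<^sub>R b) = r * g b"
    "\<And>b. b \<in> B \<Longrightarrow> \<bar>g b\<bar> \<le> nB b" "g x = 1"
    using hahn_banach[OF x(1) _ x(2)] by blast
  have "g \<in> dual_sp B nB"
    unfolding dual_sp_def using g(1-4) by (auto intro!: exI[of _ 1])
  then show ?thesis using g(4,5) by blast
qed

lemma proper_small_unit_vector:
  assumes sub: "subspace B" and nB: "norm_on B nB" and C: "\<forall>b\<in>B. norm b \<le> C * nB b"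
    and proper: "proper_Segal B nB" and d: "d > 0"
  shows "\<exists>x\<in>B. nB x = 1 \<and> norm x < d"
proof -
  have upper: "norm b \<le> max C 1 * nB b" if "b \<in> B" for b
  proof -
    have "norm b \<le> C * nB b" using C that by blast
    also have "\<dots> \<le> max C 1 * nB b" using norm_onD(1)[OF nB that] by (intro mult_right_mono) auto
    finally show ?thesis .
  qed
  have "\<not> (\<forall>b\<in>B. norm b \<le> max C 1 * nB b \<and> nB b \<le> (1/d) * norm b)"
  proof
    assume "\<forall>b\<in>B. norm b \<le> max C 1 * nB b \<and> nB b \<le> (1/d) * norm b"
    moreover have "max C 1 > 0" "1/d > 0" using d by auto
    ultimately have "\<exists>c1>0. \<exists>c2>0. \<forall>b\<in>B. norm b \<le> c1 * nB b \<and> nB b \<le> c2 * norm b"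
      by blast
    then show False using proper unfolding proper_Segal_def by blast
  qed
  then obtain b where b: "b \<in> B" and "\<not> nB b \<le> (1/d) * norm b"
    using upper by blast
  then have large: "(1/d) * norm b < nB b" by simp
  have "0 \<le> (1/d) * norm b" using d by simp
  then have pos: "nB b > 0" using large by linarith
  define x where "x = (1 / nB b) *\<^sub>R b"
  have "x \<in> B" using b sub unfolding x_def by (simp add: subspace_scale)
  moreover have "nB x = 1" using norm_onD(3)[OF nB b, of "1 / nB b"] pos unfolding x_def by simp
  moreover have "norm x = norm b / nB b" using pos unfolding x_def by simp
  moreover have "norm b / nB b < d" using large pos d by (simp add: field_simps)
  ultimately show ?thesis by auto
qed

definition norm_bounded_on :: "'a::real_normed_vector set \<Rightarrow> ('a \<Rightarrow> real) \<Rightarrow> bool" where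
  "norm_bounded_on B v \<longleftrightarrow> (\<exists>K. \<forall>a\<in>B. \<bar>v a\<bar> \<le> K * norm a)"

lemma norm_bounded_on_nonneg:
  assumes "norm_bounded_on B v"
  shows "\<exists>K\<ge>0. \<forall>a\<in>B. \<bar>v a\<bar> \<le> K * norm a"
proof -
  obtain K where K: "\<And>a. a \<in> B \<Longrightarrow> \<bar>v a\<bar> \<le> K * norm a"
    using assms unfolding norm_bounded_on_def by blast
  have "\<bar>v a\<bar> \<le> max K 0 * norm a" if "a \<in> B" for a
    using K[OF that] mult_right_mono[of K "max K 0" "norm a"] by simp
  then show ?thesis by (intro exI[of _ "max K 0"]) simp
qed

lemma quarter_series_in_dual:
  assumes g: "\<And>k. g k \<in> dual_sp B nB" and g_le: "\<And>k b. b \<in> B \<Longrightarrow> \<bar>g k b\<bar> \<le> nB b"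
  shows "(\<lambda>y. \<Sum>k. (1/4)^k * g k y) \<in> dual_sp B nB"
proof -
  have off: "\<And>k x. x \<notin> B \<Longrightarrow> g k x = 0"
    and add: "\<And>k b c. b \<in> B \<Longrightarrow> c \<in> B \<Longrightarrow> g k (b + c) = g k b + g k c"
    and scale: "\<And>k b r. b \<in> B \<Longrightarrow> g k (r *\<^sub>R b) = r * g k b"
    using g unfolding dual_sp_def by blast+
  have geo: "(\<lambda>k. (1/4::real)^k) sums (4/3)"
    using geometric_sums[of "1/4::real"] by simp
  have term_le: "\<bar>(1/4)^k * g k b\<bar> \<le> (1/4)^k * nB b" if "b \<in> B" for k b
    using g_le[OF that] by (simp add: abs_mult mult_left_mono)
  have majorant: "(\<lambda>k. (1/4)^k * nB b) sums (4/3 * nB b)" for b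
    using sums_mult2[OF geo, of "nB b"] by simp
  have summ_abs: "summable (\<lambda>k. \<bar>(1/4)^k * g k b\<bar>)" if "b \<in> B" for b
    by (rule summable_comparison_test'[OF sums_summable[OF majorant[of b]], of 0])
      (simp only: real_norm_def abs_abs term_le[OF that])
  have summ: "summable (\<lambda>k. (1/4)^k * g k b)" if "b \<in> B" for b
    using summ_abs[OF that] by (rule summable_rabs_cancel)
  have bound: "\<bar>\<Sum>k. (1/4)^k * g k b\<bar> \<le> 4/3 * nB b" if "b \<in> B" for b
  proof -
    have "\<bar>\<Sum>k. (1/4)^k * g k b\<bar> \<le> (\<Sum>k. \<bar>(1/4)^k * g k b\<bar>)"
      by (rule summable_rabs[OF summ_abs[OF that]])
    also have "\<dots> \<le> (\<Sum>k. (1/4)^k * nB b)"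
      by (rule suminf_le[OF term_le[OF that] summ_abs[OF that] sums_summable[OF majorant]])
    also have "\<dots> = 4/3 * nB b" using sums_unique[OF majorant] by simp
    finally show ?thesis .
  qed
  show ?thesis
    unfolding dual_sp_def
  proof (intro CollectI conjI allI impI ballI exI)
    show "(\<Sum>k. (1/4)^k * g k x) = 0" if "x \<notin> B" for x using off[OF that] by simp
    show "(\<Sum>k. (1/4)^k * g k (b + c)) = (\<Sum>k. (1/4)^k * g k b) + (\<Sum>k. (1/4)^k * g k c)"
      if "b \<in> B" "c \<in> B" for b c
      using suminf_add[OF summ[OF that(1)] summ[OF that(2)]] add[OF that]
      by (simp add: distrib_left)
    show "(\<Sum>k. (1/4)^k * g k (r *\<^sub>R b)) = r * (\<Sum>k. (1/4)^k * g k b)" if "b \<in> B" for b r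
      using suminf_mult[OF summ[OF that], of r] scale[OF that] by (simp add: mult_ac)
    show "\<bar>\<Sum>k. (1/4)^k * g k b\<bar> \<le> 4/3 * nB b" if "b \<in> B" for b using bound[OF that] .
  qed
qed

lemma quarter_series_lower_bound:
  fixes a K :: "nat \<Rightarrow> real"
  assumes bounded: "\<And>k. \<bar>a k\<bar> \<le> 1" and peak: "a j = 1"
    and early: "\<And>k. k < j \<Longrightarrow> \<bar>a k\<bar> \<le> K k * t"
  shows "2/3 * (1/4)^j - (\<Sum>k<j. (1/4)^k * K k) * t \<le> (\<Sum>k. (1/4)^k * a k)"
proof -
  define w where "w k = (1/4::real)^k * a k" for k
  have geo: "summable (\<lambda>k. (1/4::real)^k)" by (rule summable_geometric) simp
  have w_le: "\<bar>w k\<bar> \<le> (1/4)^k" for k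
    using bounded[of k] unfolding w_def by (simp add: abs_mult mult_left_le)
  have sw: "summable w" by (rule summable_comparison_test'[OF geo]) (use w_le in simp)
  have "(\<Sum>k. w k) = (\<Sum>n. w (n + Suc j)) + (\<Sum>k<j. w k) + (1/4)^j"
    using suminf_split_initial_segment[OF sw, of "Suc j"] peak unfolding w_def by simp
  moreover have "\<bar>\<Sum>n. w (n + Suc j)\<bar> \<le> 1/3 * (1/4)^j"
  proof -
    have geo_tail: "(\<lambda>n. (1/4::real)^(n + Suc j)) sums (1/3 * (1/4)^j)"
      using sums_mult[OF geometric_sums[of "1/4::real"], of "(1/4)^Suc j"]
      by (simp add: power_add mult_ac)
    have "summable (\<lambda>n. \<bar>w (n + Suc j)\<bar>)"
      by (rule summable_comparison_test'[OF sums_summable[OF geo_tail], of 0])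
        (simp only: real_norm_def abs_abs w_le)
    then have "\<bar>\<Sum>n. w (n + Suc j)\<bar> \<le> (\<Sum>n. \<bar>w (n + Suc j)\<bar>)"
      by (rule summable_rabs)
    also have "\<dots> \<le> (\<Sum>n. (1/4)^(n + Suc j))"
    proof (rule suminf_le)
      show "\<bar>w (n + Suc j)\<bar> \<le> (1/4)^(n + Suc j)" for n by (rule w_le)
    qed (use \<open>summable (\<lambda>n. \<bar>w (n + Suc j)\<bar>)\<close> sums_summable[OF geo_tail] in auto)
    also have "\<dots> = 1/3 * (1/4)^j" using sums_unique[OF geo_tail] by simp
    finally show ?thesis .
  qed
  moreover have "- ((\<Sum>k<j. (1/4)^k * K k) * t) \<le> (\<Sum>k<j. w k)"
  proof -
    have "- ((1/4)^k * K k * t) \<le> w k" if "k < j" for k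
    proof -
      have "(1/4)^k * \<bar>a k\<bar> \<le> (1/4)^k * (K k * t)"
        using early[OF that] by (rule mult_left_mono) simp
      moreover have "\<bar>w k\<bar> = (1/4)^k * \<bar>a k\<bar>" unfolding w_def by (simp add: abs_mult)
      moreover have "- \<bar>w k\<bar> \<le> w k" by simp
      ultimately show ?thesis by (simp only: mult.assoc)
    qed
    then have "(\<Sum>k<j. - ((1/4)^k * K k * t)) \<le> (\<Sum>k<j. w k)" by (intro sum_mono) simp
    then show ?thesis by (simp add: sum_negf sum_distrib_right)
  qed
  ultimately show ?thesis unfolding w_def by linarith
qed

lemma gliding_hump_choice:
  fixes D :: "('a::real_normed_vector \<Rightarrow> real) set"
  assumes small: "\<And>d. d > 0 \<Longrightarrow> \<exists>x\<in>B. nB x = 1 \<and> norm x < d"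
    and norming: "\<And>x. x \<in> B \<Longrightarrow> nB x = 1 \<Longrightarrow> \<exists>g\<in>D. g x = 1 \<and> (\<forall>b\<in>B. \<bar>g b\<bar> \<le> nB b)"
    and bounded: "\<And>g. g \<in> D \<Longrightarrow> \<exists>K\<ge>0. \<forall>b\<in>B. \<bar>g b\<bar> \<le> K * norm b"
  obtains y h L where "\<And>d. d > 0 \<Longrightarrow> y d \<in> B \<and> nB (y d) = 1 \<and> norm (y d) < d \<and>
    h d \<in> D \<and> h d (y d) = 1 \<and> (\<forall>b\<in>B. \<bar>h d b\<bar> \<le> nB b) \<and>
    L d \<ge> 0 \<and> (\<forall>b\<in>B. \<bar>h d b\<bar> \<le> L d * norm b)"
proof -
  define Q where "Q d q \<longleftrightarrow> fst q \<in> B \<and> nB (fst q) = 1 \<and> norm (fst q) < d \<and>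
    fst (snd q) \<in> D \<and> fst (snd q) (fst q) = 1 \<and> (\<forall>b\<in>B. \<bar>fst (snd q) b\<bar> \<le> nB b) \<and>
    snd (snd q) \<ge> 0 \<and> (\<forall>b\<in>B. \<bar>fst (snd q) b\<bar> \<le> snd (snd q) * norm b)"
    for d :: real and q :: "'a \<times> ('a \<Rightarrow> real) \<times> real"
  have "\<exists>q. d > 0 \<longrightarrow> Q d q" for d
  proof (cases "d > 0")
    case True
    then obtain y where y: "y \<in> B" "nB y = 1" "norm y < d" using small by blast
    then obtain h where h: "h \<in> D" "h y = 1" "\<forall>b\<in>B. \<bar>h b\<bar> \<le> nB b" using norming by blast
    then obtain L where "L \<ge> 0" "\<forall>b\<in>B. \<bar>h b\<bar> \<le> L * norm b" using bounded by blast
    then have "Q d (y, h, L)" unfolding Q_def using y h by simp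
    then show ?thesis by blast
  qed blast
  then obtain F where "\<And>d. d > 0 \<Longrightarrow> Q d (F d)"
    using choice[of "\<lambda>d q. d > 0 \<longrightarrow> Q d q"] by blast
  then show ?thesis using that[of "\<lambda>d. fst (F d)" "\<lambda>d. fst (snd (F d))" "\<lambda>d. snd (snd (F d))"]
    unfolding Q_def by blast
qed

text \<open>The recursive choice behind the gliding hump: unit vectors x j of tiny A-norm, normed
  by functionals g j with A-bounds K j, where the smallness of x j is measured against the
  weighted bounds of all earlier functionals.\<close>
lemma gliding_hump_sequence:
  fixes D :: "('a::real_normed_vector \<Rightarrow> real) set"
  assumes small: "\<And>d. d > 0 \<Longrightarrow> \<exists>x\<in>B. nB x = 1 \<and> norm x < d"
    and norming: "\<And>x. x \<in> B \<Longrightarrow> nB x = 1 \<Longrightarrow> \<exists>g\<in>D. g x = 1 \<and> (\<forall>b\<in>B. \<bar>g b\<bar> \<le> nB b)"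
    and bounded: "\<And>g. g \<in> D \<Longrightarrow> \<exists>K\<ge>0. \<forall>b\<in>B. \<bar>g b\<bar> \<le> K * norm b"
  obtains x g K where "\<And>j. x j \<in> B" "\<And>j. nB (x j) = 1" "\<And>j. g j \<in> D" "\<And>j. g j (x j) = 1"
    "\<And>j b. b \<in> B \<Longrightarrow> \<bar>g j b\<bar> \<le> nB b" "\<And>j. K j \<ge> 0"
    "\<And>j b. b \<in> B \<Longrightarrow> \<bar>g j b\<bar> \<le> K j * norm b"
    "\<And>j. 3 * (real j + 1) * ((\<Sum>k<j. (1/4)^k * K k) + 1) * norm (x j) < (1/4)^j"
proof -
  obtain y h L where pick: "\<And>d. d > 0 \<Longrightarrow> y d \<in> B \<and> nB (y d) = 1 \<and> norm (y d) < d \<and>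
      h d \<in> D \<and> h d (y d) = 1 \<and> (\<forall>b\<in>B. \<bar>h d b\<bar> \<le> nB b) \<and>
      L d \<ge> 0 \<and> (\<forall>b\<in>B. \<bar>h d b\<bar> \<le> L d * norm b)"
    using gliding_hump_choice[OF small norming bounded] by blast
  define \<delta> where "\<delta> j s = (1/4)^j / (3 * (real j + 1) * (s + 1))" for j s
  define S where "S = rec_nat 0 (\<lambda>j s. s + (1/4)^j * L (\<delta> j s))"
  have S_Suc: "S (Suc j) = S j + (1/4)^j * L (\<delta> j (S j))" for j unfolding S_def by simp
  have \<delta>_pos: "\<delta> j (S j) > 0" and S_nonneg: "S j \<ge> 0" for j
  proof (induction j)
    case 0
    show "\<delta> 0 (S 0) > 0" "S 0 \<ge> 0" unfolding S_def \<delta>_def by simp_all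
  next
    case (Suc j)
    then have "S (Suc j) \<ge> 0" using pick[of "\<delta> j (S j)"] S_Suc[of j] by simp
    then show "S (Suc j) \<ge> 0" "\<delta> (Suc j) (S (Suc j)) > 0" unfolding \<delta>_def by simp_all
  qed
  define K where "K j = L (\<delta> j (S j))" for j
  have S_sum: "S j = (\<Sum>k<j. (1/4)^k * K k)" for j
  proof (induction j)
    case 0
    show ?case unfolding S_def by simp
  next
    case (Suc j)
    then show ?case using S_Suc[of j] unfolding K_def by simp
  qed
  have tiny: "3 * (real j + 1) * (S j + 1) * norm (y (\<delta> j (S j))) < (1/4)^j" for j
  proof -
    have pos: "3 * (real j + 1) * (S j + 1) > 0" using S_nonneg[of j] by simp
    have "norm (y (\<delta> j (S j))) < \<delta> j (S j)" using pick[OF \<delta>_pos] by blast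
    then show ?thesis unfolding \<delta>_def pos_less_divide_eq[OF pos] by (simp only: mult.commute)
  qed
  show ?thesis
  proof (rule that[of "\<lambda>j. y (\<delta> j (S j))" "\<lambda>j. h (\<delta> j (S j))" K])
    fix j
    show "3 * (real j + 1) * ((\<Sum>k<j. (1/4)^k * K k) + 1) * norm (y (\<delta> j (S j))) < (1/4)^j"
      using tiny[of j] unfolding S_sum .
  qed (use pick[OF \<delta>_pos] in \<open>auto simp: K_def\<close>)
qed

lemma gliding_hump_arith:
  fixes S t e Kf F :: real and j :: nat
  assumes "S \<ge> 0" "t \<ge> 0" "Kf \<ge> 0"
    and tiny: "3 * (real j + 1) * (S + 1) * t < e"
    and lower: "2/3 * e - S * t \<le> F" and upper: "F \<le> Kf * t"
  shows "real j + 1 < Kf"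
proof -
  have split: "3 * (real j + 1) * (S + 1) * t = 3 * S * t + 3 * real j * S * t + 3 * (real j + 1) * t"
    by (simp add: algebra_simps)
  have "0 \<le> 3 * real j * S * t" "0 \<le> 3 * S * t" "0 \<le> 3 * (real j + 1) * t"
    using assms(1,2) by simp_all
  then have St: "3 * S * t < e" and jt: "3 * (real j + 1) * t < e"
    using tiny split by linarith+
  then have "e > 0" using \<open>0 \<le> 3 * S * t\<close> by linarith
  have "e < 3 * (Kf * t)" using lower upper St by linarith
  then have "(real j + 1) * e < (real j + 1) * (3 * (Kf * t))" by simp
  also have "\<dots> = Kf * (3 * (real j + 1) * t)" by (simp add: algebra_simps)
  also have "\<dots> \<le> Kf * e" using jt \<open>Kf \<ge> 0\<close> by (intro mult_left_mono) auto
  finally show ?thesis using \<open>e > 0\<close> by simp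
qed

text \<open>The sum f of the weighted norming functionals is large at x j
  (about (1/4)^j) while x j has A-norm below (1/4)^j / (3 (j + 1)), so no A-bound Kf
  for f can exceed every j.\<close>
lemma proper_dual_not_norm_bounded:
  assumes sub: "subspace B" and nB: "norm_on B nB" and C: "\<forall>b\<in>B. norm b \<le> C * nB b"
    and proper: "proper_Segal B nB"
  shows "\<exists>f\<in>dual_sp B nB. \<not> norm_bounded_on B f"
proof (rule ccontr)
  assume all_bounded: "\<not> (\<exists>f\<in>dual_sp B nB. \<not> norm_bounded_on B f)"
  have bounded: "\<exists>K\<ge>0. \<forall>b\<in>B. \<bar>f b\<bar> \<le> K * norm b" if "f \<in> dual_sp B nB" for f
    using norm_bounded_on_nonneg all_bounded that by blast
  obtain x g K where x: "\<And>j. x j \<in> B" "\<And>j. nB (x j) = 1"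
    and g: "\<And>j. g j \<in> dual_sp B nB" "\<And>j. g j (x j) = 1" "\<And>j b. b \<in> B \<Longrightarrow> \<bar>g j b\<bar> \<le> nB b"
      "\<And>j. K j \<ge> 0" "\<And>j b. b \<in> B \<Longrightarrow> \<bar>g j b\<bar> \<le> K j * norm b"
    and tiny: "\<And>j. 3 * (real j + 1) * ((\<Sum>k<j. (1/4)^k * K k) + 1) * norm (x j) < (1/4)^j"
    using gliding_hump_sequence[OF proper_small_unit_vector[OF sub nB C proper]
      norming_functional[OF sub nB] bounded] by blast
  define f where "f y = (\<Sum>k. (1/4)^k * g k y)" for y
  have "f \<in> dual_sp B nB" unfolding f_def by (rule quarter_series_in_dual[OF g(1,3)])
  then obtain Kf where "Kf \<ge> 0" and Kf: "\<And>b. b \<in> B \<Longrightarrow> \<bar>f b\<bar> \<le> Kf * norm b"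
    using bounded by blast
  define j where "j = nat \<lceil>Kf\<rceil>"
  have "2/3 * (1/4)^j - (\<Sum>k<j. (1/4)^k * K k) * norm (x j) \<le> f (x j)"
    unfolding f_def
  proof (rule quarter_series_lower_bound)
    show "\<bar>g k (x j)\<bar> \<le> 1" for k using g(3)[OF x(1)] x(2) by simp
    show "\<bar>g k (x j)\<bar> \<le> K k * norm (x j)" for k using g(5)[OF x(1)] .
  qed (rule g(2))
  moreover have "f (x j) \<le> Kf * norm (x j)" using Kf[OF x(1), of j] by linarith
  moreover have "(\<Sum>k<j. (1/4)^k * K k) \<ge> 0" using g(4) by (simp add: sum_nonneg)
  ultimately have "real j + 1 < Kf"
    using gliding_hump_arith[OF _ norm_ge_zero \<open>Kf \<ge> 0\<close> tiny] by blast
  moreover have "Kf \<le> real j" unfolding j_def by linarith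
  ultimately show False by linarith
qed

lemma dual_norm_le:
  assumes sub: "subspace B" and nB: "norm_on B nB" and M: "M \<ge> 0"
    and h: "\<And>b. b \<in> B \<Longrightarrow> \<bar>h b\<bar> \<le> M * nB b"
  shows "0 \<le> dual_norm B nB h" "dual_norm B nB h \<le> M"
proof -
  define T where "T = {\<bar>h b\<bar> | b. b \<in> B \<and> nB b \<le> 1}"
  have "0 \<in> B" using sub by (rule subspace_0)
  then have h0: "\<bar>h 0\<bar> \<in> T" unfolding T_def using norm_onD(2)[OF nB] by force
  have T_le: "\<tau> \<le> M" if \<tau>: "\<tau> \<in> T" for \<tau>
  proof -
    obtain b where b: "\<tau> = \<bar>h b\<bar>" "b \<in> B" "nB b \<le> 1" using \<tau> unfolding T_def by blast
    have "\<bar>h b\<bar> \<le> M * nB b" using h[OF b(2)] .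
    also have "\<dots> \<le> M * 1" using b(3) M by (rule mult_left_mono)
    finally show ?thesis using b(1) by simp
  qed
  have "\<bar>h 0\<bar> \<le> Sup T" by (rule cSup_upper[OF h0]) (use T_le in \<open>auto simp: bdd_above_def\<close>)
  then show "0 \<le> dual_norm B nB h" unfolding dual_norm_def T_def[symmetric] by linarith
  show "dual_norm B nB h \<le> M" unfolding dual_norm_def T_def[symmetric]
    using h0 T_le by (intro cSup_least) auto
qed

lemma bidual_bound:
  assumes sub: "subspace B" and nB: "norm_on B nB" and m: "m \<in> bidual_sp B nB"
  obtains Km where
    "\<And>h M. h \<in> dual_sp B nB \<Longrightarrow> M \<ge> 0 \<Longrightarrow> (\<And>b. b \<in> B \<Longrightarrow> \<bar>h b\<bar> \<le> M * nB b) \<Longrightarrow>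
       \<bar>m h\<bar> \<le> Km * M"
proof -
  obtain K where K: "\<And>f. f \<in> dual_sp B nB \<Longrightarrow> \<bar>m f\<bar> \<le> K * dual_norm B nB f"
    using m unfolding bidual_sp_def by blast
  have "\<bar>m h\<bar> \<le> max K 0 * M"
    if h: "h \<in> dual_sp B nB" "M \<ge> 0" "\<And>b. b \<in> B \<Longrightarrow> \<bar>h b\<bar> \<le> M * nB b" for h M
  proof -
    note norm_h = dual_norm_le[OF sub nB h(2,3)]
    have "\<bar>m h\<bar> \<le> K * dual_norm B nB h" using K[OF h(1)] .
    also have "\<dots> \<le> max K 0 * dual_norm B nB h" using norm_h(1) by (intro mult_right_mono) auto
    also have "\<dots> \<le> max K 0 * M" using norm_h(2) by (intro mult_left_mono) auto
    finally show ?thesis .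
  qed
  then show ?thesis using that[of "max K 0"] by blast
qed

lemma dual_compose:
  assumes sub: "subspace B" and f: "f \<in> dual_sp B nB"
    and maps: "\<And>b. b \<in> B \<Longrightarrow> \<phi> b \<in> B"
    and add: "\<And>b c. b \<in> B \<Longrightarrow> c \<in> B \<Longrightarrow> \<phi> (b + c) = \<phi> b + \<phi> c"
    and scale: "\<And>b r. b \<in> B \<Longrightarrow> \<phi> (r *\<^sub>R b) = r *\<^sub>R \<phi> b"
    and bound: "\<And>b. b \<in> B \<Longrightarrow> \<bar>f (\<phi> b)\<bar> \<le> M * nB b"
  shows "(\<lambda>b. if b \<in> B then f (\<phi> b) else 0) \<in> dual_sp B nB"
proof -
  have f_add: "\<And>b c. b \<in> B \<Longrightarrow> c \<in> B \<Longrightarrow> f (b + c) = f b + f c"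
    and f_scale: "\<And>b r. b \<in> B \<Longrightarrow> f (r *\<^sub>R b) = r * f b"
    using f unfolding dual_sp_def by blast+
  show ?thesis
    unfolding dual_sp_def
  proof (intro CollectI conjI allI impI ballI exI)
    show "(if b + c \<in> B then f (\<phi> (b + c)) else 0) =
      (if b \<in> B then f (\<phi> b) else 0) + (if c \<in> B then f (\<phi> c) else 0)" if "b \<in> B" "c \<in> B" for b c
      using that subspace_add[OF sub that] add[OF that] f_add[OF maps maps] by simp
    show "(if r *\<^sub>R b \<in> B then f (\<phi> (r *\<^sub>R b)) else 0) = r * (if b \<in> B then f (\<phi> b) else 0)"
      if "b \<in> B" for b r
      using that subspace_scale[OF sub that] scale[OF that] f_scale[OF maps] by simp
    show "\<bar>if b \<in> B then f (\<phi> b) else 0\<bar> \<le> M * nB b" if "b \<in> B" for b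
      using that bound[OF that] by simp
  qed simp
qed

lemma bidual_action_norm_bounded:
  assumes sub: "subspace B" and nB: "norm_on B nB"
    and f: "f \<in> dual_sp B nB" and m: "m \<in> bidual_sp B nB"
    and maps: "\<And>a b. a \<in> B \<Longrightarrow> b \<in> B \<Longrightarrow> \<phi> a b \<in> B"
    and add: "\<And>a b c. a \<in> B \<Longrightarrow> b \<in> B \<Longrightarrow> c \<in> B \<Longrightarrow> \<phi> a (b + c) = \<phi> a b + \<phi> a c"
    and scale: "\<And>a b r. a \<in> B \<Longrightarrow> b \<in> B \<Longrightarrow> \<phi> a (r *\<^sub>R b) = r *\<^sub>R \<phi> a b"
    and L: "L \<ge> 0" and bound: "\<And>a b. a \<in> B \<Longrightarrow> b \<in> B \<Longrightarrow> nB (\<phi> a b) \<le> L * norm a * nB b"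
  shows "norm_bounded_on B (\<lambda>a. if a \<in> B then m (\<lambda>b. if b \<in> B then f (\<phi> a b) else 0) else 0)"
proof -
  obtain K where K: "\<And>b. b \<in> B \<Longrightarrow> \<bar>f b\<bar> \<le> K * nB b"
    using f unfolding dual_sp_def by blast
  define Kf where "Kf = max K 0"
  have "Kf \<ge> 0" unfolding Kf_def by simp
  have Kf: "\<bar>f b\<bar> \<le> Kf * nB b" if "b \<in> B" for b
    using K[OF that] norm_onD(1)[OF nB that] mult_right_mono[of K Kf "nB b"]
    unfolding Kf_def by simp
  obtain Km where Km: "\<And>h M. h \<in> dual_sp B nB \<Longrightarrow> M \<ge> 0 \<Longrightarrow>
      (\<And>b. b \<in> B \<Longrightarrow> \<bar>h b\<bar> \<le> M * nB b) \<Longrightarrow> \<bar>m h\<bar> \<le> Km * M"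
    using bidual_bound[OF sub nB m] by blast
  have "\<bar>m (\<lambda>b. if b \<in> B then f (\<phi> a b) else 0)\<bar> \<le> (Km * Kf * L) * norm a" if a: "a \<in> B" for a
  proof -
    have comp: "\<bar>f (\<phi> a b)\<bar> \<le> (Kf * L * norm a) * nB b" if b: "b \<in> B" for b
    proof -
      have "\<bar>f (\<phi> a b)\<bar> \<le> Kf * nB (\<phi> a b)" using Kf[OF maps[OF a b]] .
      also have "\<dots> \<le> Kf * (L * norm a * nB b)"
        using bound[OF a b] \<open>Kf \<ge> 0\<close> by (rule mult_left_mono)
      finally show ?thesis by (simp only: mult.assoc)
    qed
    have "(\<lambda>b. if b \<in> B then f (\<phi> a b) else 0) \<in> dual_sp B nB"
      by (rule dual_compose[OF sub f maps[OF a] add[OF a] scale[OF a] comp])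
    moreover have "Kf * L * norm a \<ge> 0" using \<open>Kf \<ge> 0\<close> L by simp
    ultimately have "\<bar>m (\<lambda>b. if b \<in> B then f (\<phi> a b) else 0)\<bar> \<le> Km * (Kf * L * norm a)"
      using Km comp by simp
    then show ?thesis by (simp only: mult.assoc)
  qed
  then show ?thesis unfolding norm_bounded_on_def by (intro exI[of _ "Km * Kf * L"]) simp
qed

lemma lin_span_norm_bounded:
  assumes S: "\<And>v. v \<in> S \<Longrightarrow> norm_bounded_on B v" and g: "g \<in> lin_span S"
  shows "norm_bounded_on B g"
proof -
  obtain n :: nat and c v where v: "\<And>i. i < n \<Longrightarrow> v i \<in> S" and g_eq: "g = (\<lambda>x. \<Sum>i<n. c i * v i x)"
    using g unfolding lin_span_def by blast
  have "\<exists>K. \<forall>a\<in>B. \<bar>v i a\<bar> \<le> K * norm a" if "i < n" for i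
    using S[OF v[OF that]] unfolding norm_bounded_on_def .
  then obtain K where K: "\<And>i a. i < n \<Longrightarrow> a \<in> B \<Longrightarrow> \<bar>v i a\<bar> \<le> K i * norm a"
    by metis
  have "\<bar>g a\<bar> \<le> (\<Sum>i<n. \<bar>c i\<bar> * K i) * norm a" if a: "a \<in> B" for a
  proof -
    have "\<bar>g a\<bar> \<le> (\<Sum>i<n. \<bar>c i\<bar> * \<bar>v i a\<bar>)" unfolding g_eq by (simp add: sum_abs[THEN order_trans] abs_mult)
    also have "\<dots> \<le> (\<Sum>i<n. \<bar>c i\<bar> * (K i * norm a))"
      using K a by (intro sum_mono mult_left_mono) auto
    finally show ?thesis by (simp add: sum_distrib_right mult.assoc)
  qed
  then show ?thesis unfolding norm_bounded_on_def by blast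
qed

lemma dual_ne_span_of_norm_bounded:
  assumes sub: "subspace B" and nB: "norm_on B nB" and C: "\<forall>b\<in>B. norm b \<le> C * nB b"
    and proper: "proper_Segal B nB" and S: "\<And>v. v \<in> S \<Longrightarrow> norm_bounded_on B v"
  shows "dual_sp B nB \<noteq> lin_span S"
proof
  assume eq: "dual_sp B nB = lin_span S"
  obtain f where "f \<in> dual_sp B nB" "\<not> norm_bounded_on B f"
    using proper_dual_not_norm_bounded[OF sub nB C proper] by blast
  then show False using lin_span_norm_bounded[OF S] eq by blast
qed

lemma right_abstract_Segal_facts:
  assumes "right_abstract_Segal B nB"
  shows "subspace B" "norm_on B nB" "\<And>b a. b \<in> B \<Longrightarrow> b * a \<in> B"
    "\<exists>C. (\<forall>b\<in>B. norm b \<le> C * nB b) \<and> (\<forall>b\<in>B. \<forall>a. nB (b * a) \<le> C * nB b * norm a)"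
  using assms unfolding right_abstract_Segal_def banach_subalgebra_norm_def by simp_all

lemma left_abstract_Segal_facts:
  assumes "left_abstract_Segal B nB"
  shows "subspace B" "norm_on B nB" "\<And>b a. b \<in> B \<Longrightarrow> a * b \<in> B"
    "\<exists>C. (\<forall>b\<in>B. norm b \<le> C * nB b) \<and> (\<forall>b\<in>B. \<forall>a. nB (a * b) \<le> C * norm a * nB b)"
  using assms unfolding left_abstract_Segal_def banach_subalgebra_norm_def by simp_all

text \<open>In a right abstract Segal algebra every f \<triangle> m is A-bounded: it is the action
  of m on f composed with right multiplication by a.\<close>
lemma ftr_norm_bounded:
  assumes R: "right_abstract_Segal B nB" and f: "f \<in> dual_sp B nB" and m: "m \<in> bidual_sp B nB"
  shows "norm_bounded_on B (ftr B f m)"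
proof -
  note sub = right_abstract_Segal_facts(1)[OF R] and nB = right_abstract_Segal_facts(2)[OF R]
    and ideal = right_abstract_Segal_facts(3)[OF R]
  obtain C where mult: "\<And>b a. b \<in> B \<Longrightarrow> nB (b * a) \<le> C * nB b * norm a"
    using right_abstract_Segal_facts(4)[OF R] by blast
  have bound: "nB (b * a) \<le> max C 0 * norm a * nB b" if "b \<in> B" for a b
    using mult[OF that, of a] mult_right_mono[of C "max C 0" "nB b * norm a"] norm_onD(1)[OF nB that]
    by (simp add: mult_ac)
  have "norm_bounded_on B
      (\<lambda>a. if a \<in> B then m (\<lambda>b. if b \<in> B then f (b * a) else 0) else 0)"
    by (rule bidual_action_norm_bounded[OF sub nB f m, where L = "max C 0"])
      (auto simp: ideal bound distrib_right)
  then show ?thesis unfolding ftr_def atr_def .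
qed

lemma msq_norm_bounded:
  assumes L: "left_abstract_Segal B nB" and f: "f \<in> dual_sp B nB" and m: "m \<in> bidual_sp B nB"
  shows "norm_bounded_on B (msq B m f)"
proof -
  note sub = left_abstract_Segal_facts(1)[OF L] and nB = left_abstract_Segal_facts(2)[OF L]
    and ideal = left_abstract_Segal_facts(3)[OF L]
  obtain C where mult: "\<And>b a. b \<in> B \<Longrightarrow> nB (a * b) \<le> C * norm a * nB b"
    using left_abstract_Segal_facts(4)[OF L] by blast
  have bound: "nB (a * b) \<le> max C 0 * norm a * nB b" if "b \<in> B" for a b
    using mult[OF that, of a] mult_right_mono[of C "max C 0" "norm a * nB b"] norm_onD(1)[OF nB that]
    by (simp add: mult_ac)
  have "norm_bounded_on B
      (\<lambda>a. if a \<in> B then m (\<lambda>b. if b \<in> B then f (a * b) else 0) else 0)"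
    by (rule bidual_action_norm_bounded[OF sub nB f m, where L = "max C 0"])
      (auto simp: ideal bound distrib_left)
  then show ?thesis unfolding msq_def fsq_def .
qed

theorem theorem1:
  fixes B :: "'a::{real_normed_algebra,banach} set" and nB :: "'a \<Rightarrow> real"
  assumes "faithful_algebra TYPE('a)"
  shows "(right_abstract_Segal B nB \<and> proper_Segal B nB \<longrightarrow>
            dual_sp B nB \<noteq>
              lin_span {ftr B f m | f m. f \<in> dual_sp B nB \<and> m \<in> bidual_sp B nB})
       \<and> (left_abstract_Segal B nB \<and> proper_Segal B nB \<longrightarrow>
            dual_sp B nB \<noteq>
              lin_span {msq B m f | m f. m \<in> bidual_sp B nB \<and> f \<in> dual_sp B nB})"
proof (intro conjI impI; elim conjE)
  assume R: "right_abstract_Segal B nB" and proper: "proper_Segal B nB"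
  obtain C where C: "\<forall>b\<in>B. norm b \<le> C * nB b"
    using right_abstract_Segal_facts(4)[OF R] by blast
  show "dual_sp B nB \<noteq> lin_span {ftr B f m | f m. f \<in> dual_sp B nB \<and> m \<in> bidual_sp B nB}"
  proof (rule dual_ne_span_of_norm_bounded[OF right_abstract_Segal_facts(1,2)[OF R] C proper])
    fix v assume "v \<in> {ftr B f m | f m. f \<in> dual_sp B nB \<and> m \<in> bidual_sp B nB}"
    then show "norm_bounded_on B v" using ftr_norm_bounded[OF R] by blast
  qed
next
  assume L: "left_abstract_Segal B nB" and proper: "proper_Segal B nB"
  obtain C where C: "\<forall>b\<in>B. norm b \<le> C * nB b"
    using left_abstract_Segal_facts(4)[OF L] by blast
  show "dual_sp B nB \<noteq> lin_span {msq B m f | m f. m \<in> bidual_sp B nB \<and> f \<in> dual_sp B nB}"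
  proof (rule dual_ne_span_of_norm_bounded[OF left_abstract_Segal_facts(1,2)[OF L] C proper])
    fix v assume "v \<in> {msq B m f | m f. m \<in> bidual_sp B nB \<and> f \<in> dual_sp B nB}"
    then show "norm_bounded_on B v" using msq_norm_bounded[OF L] by blast
  qed
qed

end
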